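(* Let $C$ be an ordered field and $I$ a nonempty index set. The complete $\mathcal{L}_{C,I}$-theory $T_{C,I}$ is distal.
   Context: An $I$-ordered $C$-vector space is a $C$-vector space $G$ with a family $(<_i)_{i\in I}$ of total orderings such that for each $i$, $(G,<_i)$ is an ordered $C$-vector space. The $I$-ordering is independent if for every $n$, distinct $i_1,\dots,i_n\in I$ and $a_1,b_1,\dots,a_n,b_n\in G\cup\{-\infty,+\infty\}$ with $a_k<_{i_k}b_k$ ($k=1,\dots,n$), there is $z\in G$ with $a_k<_{i_k}z<_{i_k}b_k$ for all $k$. The language is $\mathcal{L}_{C,I}=\{0,+,(\lambda_c)_{c\in C}\}\cup\{<_i:i\in I\}$, with $\lambda_c$ scalar multiplication by $c$, and $T_{C,I}$ is the theory whose models are exactly the $I$-ordered $C$-vector spaces with independent $I$-ordering (it is complete). A complete theory $T$ is distal if, in a monster model, for every parameter set $A$ and every indiscernible sequence $(a_i)_{i\in I'}$ with $I'=I_1+(c)+I_2$, $I_1,I_2$ infinite, such that $(a_i)_{i\in I_1+I_2}$ is $A$-indiscernible, the whole sequence is $A$-indiscernible. *)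

theory Defs
  imports Complex_Main
begin

text \<open>The underlying C-vector space is the whole type 'g (class ab_group_add gives 0 and +),
  with scalar multiplication smul (interpreting the function symbols lambda_c).
  The orderings are lt i, for i in the index type 'i (index set I = UNIV :: 'i set,
  automatically nonempty).\<close>

definition ordered_vs :: "('c::linordered_field \<Rightarrow> 'g::ab_group_add \<Rightarrow> 'g) \<Rightarrow> ('g \<Rightarrow> 'g \<Rightarrow> bool) \<Rightarrow> bool" where
  "ordered_vs smul lt \<longleftrightarrow>
     (\<forall>x. \<not> lt x x) \<and>
     (\<forall>x y z. lt x y \<longrightarrow> lt y z \<longrightarrow> lt x z) \<and>
     (\<forall>x y. x \<noteq> y \<longrightarrow> lt x y \<or> lt y x) \<and>
     (\<forall>x y z. lt x y \<longrightarrow> lt (x + z) (y + z)) \<and>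
     (\<forall>(c::'c) x y. 0 < c \<longrightarrow> lt x y \<longrightarrow> lt (smul c x) (smul c y))"

text \<open>Independence: None as a lower bound means -infinity, None as an upper bound +infinity.
  A finite set J of distinct indices i_1,...,i_n.\<close>

definition independent_ordering :: "('i \<Rightarrow> 'g \<Rightarrow> 'g \<Rightarrow> bool) \<Rightarrow> bool" where
  "independent_ordering lt \<longleftrightarrow>
     (\<forall>(J::'i set) (a::'i \<Rightarrow> 'g option) (b::'i \<Rightarrow> 'g option). finite J \<longrightarrow>
        (\<forall>k\<in>J. \<forall>a' b'. a k = Some a' \<longrightarrow> b k = Some b' \<longrightarrow> lt k a' b') \<longrightarrow>
        (\<exists>z. \<forall>k\<in>J. (case a k of None \<Rightarrow> True | Some a' \<Rightarrow> lt k a' z) \<and>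
                    (case b k of None \<Rightarrow> True | Some b' \<Rightarrow> lt k z b')))"

definition model_T :: "('c::linordered_field \<Rightarrow> 'g::ab_group_add \<Rightarrow> 'g) \<Rightarrow> ('i \<Rightarrow> 'g \<Rightarrow> 'g \<Rightarrow> bool) \<Rightarrow> bool" where
  "model_T smul lt \<longleftrightarrow> vector_space smul \<and> (\<forall>i. ordered_vs smul (lt i)) \<and> independent_ordering lt"

datatype ('c, 'g) trm = Var nat | Par 'g | Zero | Plus "('c, 'g) trm" "('c, 'g) trm" | Scal 'c "('c, 'g) trm"

datatype ('c, 'i, 'g) fm =
    Eq "('c, 'g) trm" "('c, 'g) trm"
  | Less 'i "('c, 'g) trm" "('c, 'g) trm"
  | Neg "('c, 'i, 'g) fm"
  | Conj "('c, 'i, 'g) fm" "('c, 'i, 'g) fm"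
  | Ex nat "('c, 'i, 'g) fm"

primrec params_trm :: "('c, 'g) trm \<Rightarrow> 'g set" where
  "params_trm (Var x) = {}"
| "params_trm (Par g) = {g}"
| "params_trm Zero = {}"
| "params_trm (Plus s t) = params_trm s \<union> params_trm t"
| "params_trm (Scal c t) = params_trm t"

primrec params :: "('c, 'i, 'g) fm \<Rightarrow> 'g set" where
  "params (Eq s t) = params_trm s \<union> params_trm t"
| "params (Less i s t) = params_trm s \<union> params_trm t"
| "params (Neg \<phi>) = params \<phi>"
| "params (Conj \<phi> \<psi>) = params \<phi> \<union> params \<psi>"
| "params (Ex x \<phi>) = params \<phi>"

primrec eval :: "('c \<Rightarrow> 'g::ab_group_add \<Rightarrow> 'g) \<Rightarrow> (nat \<Rightarrow> 'g) \<Rightarrow> ('c, 'g) trm \<Rightarrow> 'g" where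
  "eval smul v (Var x) = v x"
| "eval smul v (Par g) = g"
| "eval smul v Zero = 0"
| "eval smul v (Plus s t) = eval smul v s + eval smul v t"
| "eval smul v (Scal c t) = smul c (eval smul v t)"

primrec sat :: "('c \<Rightarrow> 'g::ab_group_add \<Rightarrow> 'g) \<Rightarrow> ('i \<Rightarrow> 'g \<Rightarrow> 'g \<Rightarrow> bool) \<Rightarrow> (nat \<Rightarrow> 'g) \<Rightarrow> ('c, 'i, 'g) fm \<Rightarrow> bool" where
  "sat smul lt v (Eq s t) = (eval smul v s = eval smul v t)"
| "sat smul lt v (Less i s t) = lt i (eval smul v s) (eval smul v t)"
| "sat smul lt v (Neg \<phi>) = (\<not> sat smul lt v \<phi>)"
| "sat smul lt v (Conj \<phi> \<psi>) = (sat smul lt v \<phi> \<and> sat smul lt v \<psi>)"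
| "sat smul lt v (Ex x \<phi>) = (\<exists>g. sat smul lt (v(x := g)) \<phi>)"

text \<open>A sequence of n-tuples a :: 'o \<Rightarrow> nat \<Rightarrow> 'g (only coordinates < n matter).
  For an increasing k-tuple s of indices, the assignment sends variable p*n+q (p<k, q<n)
  to coordinate q of a (s p); all other variables are sent to 0.\<close>

definition seq_asg :: "nat \<Rightarrow> ('o \<Rightarrow> nat \<Rightarrow> 'g::zero) \<Rightarrow> nat \<Rightarrow> (nat \<Rightarrow> 'o) \<Rightarrow> nat \<Rightarrow> 'g" where
  "seq_asg n a k s x = (if x < k * n then a (s (x div n)) (x mod n) else 0)"

definition incr_in :: "'o::linorder set \<Rightarrow> nat \<Rightarrow> (nat \<Rightarrow> 'o) \<Rightarrow> bool" where
  "incr_in J k s \<longleftrightarrow> (\<forall>p<k. s p \<in> J) \<and> (\<forall>p q. p < q \<longrightarrow> q < k \<longrightarrow> s p < s q)"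

definition indiscernible ::
  "('c \<Rightarrow> 'g::ab_group_add \<Rightarrow> 'g) \<Rightarrow> ('i \<Rightarrow> 'g \<Rightarrow> 'g \<Rightarrow> bool) \<Rightarrow> nat \<Rightarrow> ('o::linorder \<Rightarrow> nat \<Rightarrow> 'g) \<Rightarrow> 'o set \<Rightarrow> 'g set \<Rightarrow> bool" where
  "indiscernible smul lt n a J A \<longleftrightarrow>
     (\<forall>(\<phi>::('c, 'i, 'g) fm) k s t. params \<phi> \<subseteq> A \<longrightarrow> incr_in J k s \<longrightarrow> incr_in J k t \<longrightarrow>
        (sat smul lt (seq_asg n a k s) \<phi> \<longleftrightarrow> sat smul lt (seq_asg n a k t) \<phi>))"

end

theory Submission
  imports Defs
begin

text \<open>
  Every formula with parameters in \<open>A\<close> is equivalent to a boolean combination of atoms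
  \<open>t = 0\<close> and \<open>0 <\<^sub>i t\<close>, \<open>t\<close> a linear term over \<open>A\<close>: an existential quantifier is
  eliminated by solving an equation for the variable, or else by Fourier-Motzkin in each
  order separately, the independence of the orders making the separate conditions jointly
  satisfiable. So it suffices to see that the sign of such a term at a tuple \<open>S\<close> through
  \<open>c\<close> is its sign at tuples avoiding \<open>c\<close>. Shift the block of \<open>S\<close> around \<open>c\<close> into the
  infinite gaps just below and just above it, obtaining \<open>T\<close> and \<open>T'\<close> with \<open>(T, S)\<close>
  and \<open>(S, T')\<close> interleaved alike. Indiscernibility over the empty set, applied to the
  parameter-free difference \<open>t(S) - t(T)\<close> versus \<open>t(T') - t(S)\<close>, puts \<open>t(S)\<close> between
  \<open>t(T)\<close> and \<open>t(T')\<close> in every order, and these two have the same sign by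
  \<open>A\<close>-indiscernibility of the sequence without \<open>c\<close>.
\<close>

locale ordered_space = vector_space scale
  for scale :: "'c::linordered_field \<Rightarrow> 'g::ab_group_add \<Rightarrow> 'g" +
  fixes lt :: "'g \<Rightarrow> 'g \<Rightarrow> bool"
  assumes ordered: "ordered_vs scale lt"
begin

lemma lt_irrefl [simp]: "\<not> lt x x"
  using ordered by (simp add: ordered_vs_def)

lemma lt_trans: "lt x y \<Longrightarrow> lt y z \<Longrightarrow> lt x z"
  using ordered unfolding ordered_vs_def by blast

lemma lt_linear: "x \<noteq> y \<Longrightarrow> lt x y \<or> lt y x"
  using ordered unfolding ordered_vs_def by blast

lemma lt_asym: "lt x y \<Longrightarrow> \<not> lt y x"
  using lt_trans lt_irrefl by blast

lemma transp_on_lt: "transp_on A lt"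
  by (auto intro: transp_onI lt_trans)

lemma totalp_on_lt: "totalp_on A lt"
  by (auto intro: totalp_onI dest: lt_linear)

lemma lt_add_right: "lt x y \<Longrightarrow> lt (x + z) (y + z)"
  using ordered unfolding ordered_vs_def by blast

lemma lt_iff_diff_pos: "lt x y \<longleftrightarrow> lt 0 (y - x)"
  using lt_add_right[of x y "- x"] lt_add_right[of 0 "y - x" x] by auto

lemma neg_pos_iff: "lt 0 (- x) \<longleftrightarrow> lt x 0"
  using lt_iff_diff_pos[of x 0] by simp

lemma scale_pos_iff:
  assumes "0 < c"
  shows "lt 0 (scale c x) \<longleftrightarrow> lt 0 x"
proof
  assume "lt 0 (scale c x)"
  then have "lt (scale (inverse c) 0) (scale (inverse c) (scale c x))"
    using assms ordered unfolding ordered_vs_def by (metis inverse_positive_iff_positive)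
  then show "lt 0 x"
    using assms by simp
next
  assume "lt 0 x"
  then show "lt 0 (scale c x)"
    using assms ordered unfolding ordered_vs_def by (metis scale_zero_right)
qed

lemma scale_neg_iff:
  assumes "c < 0"
  shows "lt 0 (scale c x) \<longleftrightarrow> lt x 0"
  using scale_pos_iff[of "- c" "- x"] assms by (simp add: neg_pos_iff)

lemma sign_between:
  assumes "x = y \<longleftrightarrow> z = x" and "lt y x \<longleftrightarrow> lt x z"
    and "y = 0 \<longleftrightarrow> z = 0" and "lt 0 y \<longleftrightarrow> lt 0 z"
  shows "(x = 0 \<longleftrightarrow> y = 0) \<and> (lt 0 x \<longleftrightarrow> lt 0 y)"
proof (cases "x = y")
  case True
  then show ?thesis using assms by simp
next
  case False
  then have "lt y x \<and> lt x z \<or> lt x y \<and> lt z x"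
    using assms(1,2) lt_linear by metis
  then show ?thesis
    using assms(3,4) lt_linear lt_trans lt_asym by (elim disjE conjE) blast+
qed

end

primrec trm_subst :: "nat \<Rightarrow> ('c, 'g) trm \<Rightarrow> ('c, 'g) trm \<Rightarrow> ('c, 'g) trm" where
  "trm_subst y s (Var x) = (if x = y then s else Var x)"
| "trm_subst y s (Par g) = Par g"
| "trm_subst y s Zero = Zero"
| "trm_subst y s (Plus t u) = Plus (trm_subst y s t) (trm_subst y s u)"
| "trm_subst y s (Scal c t) = Scal c (trm_subst y s t)"

primrec trm_rename :: "(nat \<Rightarrow> nat) \<Rightarrow> ('c, 'g) trm \<Rightarrow> ('c, 'g) trm" where
  "trm_rename r (Var x) = Var (r x)"
| "trm_rename r (Par g) = Par g"
| "trm_rename r Zero = Zero"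
| "trm_rename r (Plus t u) = Plus (trm_rename r t) (trm_rename r u)"
| "trm_rename r (Scal c t) = Scal c (trm_rename r t)"

primrec linear_part :: "('c, 'g) trm \<Rightarrow> ('c, 'g) trm" where
  "linear_part (Var x) = Var x"
| "linear_part (Par g) = Zero"
| "linear_part Zero = Zero"
| "linear_part (Plus t u) = Plus (linear_part t) (linear_part u)"
| "linear_part (Scal c t) = Scal c (linear_part t)"

primrec coeff :: "nat \<Rightarrow> ('c::field, 'g) trm \<Rightarrow> 'c" where
  "coeff y (Var x) = (if x = y then 1 else 0)"
| "coeff y (Par g) = 0"
| "coeff y Zero = 0"
| "coeff y (Plus t u) = coeff y t + coeff y u"
| "coeff y (Scal c t) = c * coeff y t"

text \<open>The root of \<open>t\<close> as a linear equation in \<open>Var y\<close>; junk if \<open>coeff y t = 0\<close>.\<close>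

definition solve :: "nat \<Rightarrow> ('c::field, 'g) trm \<Rightarrow> ('c, 'g) trm" where
  "solve y t = Scal (- inverse (coeff y t)) (trm_subst y Zero t)"

lemma params_trm_subst: "params_trm (trm_subst y s t) \<subseteq> params_trm t \<union> params_trm s"
  by (induction t) auto

lemma params_trm_rename [simp]: "params_trm (trm_rename r t) = params_trm t"
  by (induction t) auto

lemma params_linear_part [simp]: "params_trm (linear_part t) = {}"
  by (induction t) auto

lemma params_solve: "params_trm (solve y t) \<subseteq> params_trm t"
  using params_trm_subst[of y Zero t] by (simp add: solve_def)

context vector_space
begin

lemma eval_trm_subst: "eval scale v (trm_subst y s t) = eval scale (v(y := eval scale v s)) t"
  by (induction t) auto

lemma eval_trm_rename: "eval scale v (trm_rename r t) = eval scale (v \<circ> r) t"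
  by (induction t) auto

lemma eval_linear_part: "eval scale v t = eval scale v (linear_part t) + eval scale (\<lambda>_. 0) t"
  by (induction t) (auto simp: algebra_simps)

lemma eval_coeff: "eval scale v t = scale (coeff y t) (v y) + eval scale (v(y := 0)) t"
  by (induction t) (auto simp: algebra_simps)

lemma eval_upd_coeff_0: "coeff y t = 0 \<Longrightarrow> eval scale (v(y := g)) t = eval scale v t"
  using eval_coeff[of "v(y := g)" t y] eval_coeff[of v t y] by simp

lemma eval_upd_solve:
  assumes "coeff y t \<noteq> 0"
  shows "eval scale (v(y := g)) t = scale (coeff y t) (g - eval scale v (solve y t))"
  using eval_coeff[of "v(y := g)" t y] assms
  by (simp add: solve_def eval_trm_subst scale_right_distrib)

end

context ordered_space
begin

lemma lt_0_eval_upd_pos_coeff: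
  "0 < coeff y t \<Longrightarrow> lt 0 (eval scale (v(y := g)) t) \<longleftrightarrow> lt (eval scale v (solve y t)) g"
  by (simp add: eval_upd_solve scale_pos_iff flip: lt_iff_diff_pos)

lemma lt_0_eval_upd_neg_coeff:
  "coeff y t < 0 \<Longrightarrow> lt 0 (eval scale (v(y := g)) t) \<longleftrightarrow> lt g (eval scale v (solve y t))"
  by (simp add: eval_upd_solve scale_neg_iff lt_iff_diff_pos[of _ 0] flip: lt_iff_diff_pos)

end

section \<open>Quantifier elimination\<close>

datatype ('c, 'i, 'g) lit = Eq0 "('c, 'g) trm" | Gt0 'i "('c, 'g) trm"

primrec lit_trm :: "('c, 'i, 'g) lit \<Rightarrow> ('c, 'g) trm" where
  "lit_trm (Eq0 t) = t"
| "lit_trm (Gt0 i t) = t"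

primrec lit_subst :: "nat \<Rightarrow> ('c, 'g) trm \<Rightarrow> ('c, 'i, 'g) lit \<Rightarrow> ('c, 'i, 'g) lit" where
  "lit_subst y s (Eq0 t) = Eq0 (trm_subst y s t)"
| "lit_subst y s (Gt0 i t) = Gt0 i (trm_subst y s t)"

primrec lit_sat ::
  "('c \<Rightarrow> 'g::ab_group_add \<Rightarrow> 'g) \<Rightarrow> ('i \<Rightarrow> 'g \<Rightarrow> 'g \<Rightarrow> bool) \<Rightarrow> (nat \<Rightarrow> 'g) \<Rightarrow>
    ('c, 'i, 'g) lit \<Rightarrow> bool"
where
  "lit_sat smul lt v (Eq0 t) \<longleftrightarrow> eval smul v t = 0"
| "lit_sat smul lt v (Gt0 i t) \<longleftrightarrow> lt i 0 (eval smul v t)"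

definition conj_sat ::
  "('c \<Rightarrow> 'g::ab_group_add \<Rightarrow> 'g) \<Rightarrow> ('i \<Rightarrow> 'g \<Rightarrow> 'g \<Rightarrow> bool) \<Rightarrow> (nat \<Rightarrow> 'g) \<Rightarrow>
    ('c, 'i, 'g) lit list \<Rightarrow> bool"
where "conj_sat smul lt v C \<longleftrightarrow> (\<forall>l\<in>set C. lit_sat smul lt v l)"

definition dnf_sat ::
  "('c \<Rightarrow> 'g::ab_group_add \<Rightarrow> 'g) \<Rightarrow> ('i \<Rightarrow> 'g \<Rightarrow> 'g \<Rightarrow> bool) \<Rightarrow> (nat \<Rightarrow> 'g) \<Rightarrow>
    ('c, 'i, 'g) lit list list \<Rightarrow> bool"
where "dnf_sat smul lt v D \<longleftrightarrow> (\<exists>C\<in>set D. conj_sat smul lt v C)"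

definition dnf_params :: "('c, 'i, 'g) lit list list \<Rightarrow> 'g set" where
  "dnf_params D = (\<Union>C\<in>set D. \<Union>l\<in>set C. params_trm (lit_trm l))"

definition dnf_conj :: "'a list list \<Rightarrow> 'a list list \<Rightarrow> 'a list list" where
  "dnf_conj D1 D2 = [C1 @ C2. C1 \<leftarrow> D1, C2 \<leftarrow> D2]"

text \<open>The index \<open>i0\<close> is arbitrary: \<open>t \<noteq> 0\<close> iff \<open>t\<close> or \<open>-t\<close> is positive in any one order.\<close>

primrec lit_neg :: "'i \<Rightarrow> ('c::field, 'i, 'g) lit \<Rightarrow> ('c, 'i, 'g) lit list list" where
  "lit_neg i0 (Eq0 t) = [[Gt0 i0 t], [Gt0 i0 (Scal (-1) t)]]"
| "lit_neg i0 (Gt0 i t) = [[Eq0 t], [Gt0 i (Scal (-1) t)]]"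

definition dnf_neg :: "'i \<Rightarrow> ('c::field, 'i, 'g) lit list list \<Rightarrow> ('c, 'i, 'g) lit list list" where
  "dnf_neg i0 D = foldr (\<lambda>C. dnf_conj (concat (map (lit_neg i0) C))) D [[]]"

definition bound_pairs ::
  "nat \<Rightarrow> ('c::linordered_field, 'i, 'g) lit list \<Rightarrow> ('c, 'i, 'g) lit list"
where
  "bound_pairs y C = [Gt0 i (Plus (solve y u) (Scal (-1) (solve y l))).
     Gt0 i l \<leftarrow> C, Gt0 j u \<leftarrow> C, i = j, 0 < coeff y l, coeff y u < 0]"

definition pivots :: "nat \<Rightarrow> ('c::field, 'i, 'g) lit list \<Rightarrow> ('c, 'g) trm list" where
  "pivots y C = [t. Eq0 t \<leftarrow> C, coeff y t \<noteq> 0]"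

text \<open>
  Eliminates \<open>\<exists>y\<close> from a conjunction: an equation involving \<open>y\<close> is solved for it;
  otherwise every lower bound of \<open>y\<close> in an order must lie below every upper bound in the
  same order.
\<close>

definition elim :: "nat \<Rightarrow> ('c::linordered_field, 'i, 'g) lit list \<Rightarrow> ('c, 'i, 'g) lit list" where
  "elim y C = (case pivots y C of
      t # _ \<Rightarrow> map (lit_subst y (solve y t)) C
    | [] \<Rightarrow> [l \<leftarrow> C. coeff y (lit_trm l) = 0] @ bound_pairs y C)"

lemma lit_trm_subst [simp]: "lit_trm (lit_subst y s l) = trm_subst y s (lit_trm l)"
  by (cases l) auto

lemma mem_bound_pairs:
  "x \<in> set (bound_pairs y C) \<longleftrightarrow> (\<exists>i l u. Gt0 i l \<in> set C \<and> Gt0 i u \<in> set C \<and>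
     0 < coeff y l \<and> coeff y u < 0 \<and> x = Gt0 i (Plus (solve y u) (Scal (-1) (solve y l))))"
  unfolding bound_pairs_def by (auto split: lit.splits) blast

lemma dnf_params_conj: "dnf_params (dnf_conj D1 D2) \<subseteq> dnf_params D1 \<union> dnf_params D2"
  unfolding dnf_params_def dnf_conj_def by auto

lemma dnf_params_concat: "dnf_params (concat Ds) = (\<Union>D\<in>set Ds. dnf_params D)"
  by (auto simp: dnf_params_def)

lemma dnf_params_lit_neg [simp]: "dnf_params (lit_neg i0 l) = params_trm (lit_trm l)"
  by (cases l) (auto simp: dnf_params_def)

lemma dnf_neg_Cons: "dnf_neg i0 (C # D) = dnf_conj (concat (map (lit_neg i0) C)) (dnf_neg i0 D)"
  by (simp add: dnf_neg_def)

lemma dnf_params_neg: "dnf_params (dnf_neg i0 D) \<subseteq> dnf_params D"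
proof (induction D)
  case (Cons C D)
  have "dnf_params (concat (map (lit_neg i0) C)) = dnf_params [C]"
    by (simp add: dnf_params_concat) (simp add: dnf_params_def)
  moreover have "dnf_params (C # D) = dnf_params [C] \<union> dnf_params D"
    by (simp add: dnf_params_def)
  ultimately show ?case
    using Cons dnf_params_conj[of "concat (map (lit_neg i0) C)" "dnf_neg i0 D"]
    by (auto simp: dnf_neg_Cons)
qed (simp add: dnf_neg_def dnf_params_def)

lemma set_pivots: "t \<in> set (pivots y C) \<longleftrightarrow> Eq0 t \<in> set C \<and> coeff y t \<noteq> 0"
  unfolding pivots_def by (auto split: lit.splits)

lemma dnf_params_elim: "dnf_params [elim y C] \<subseteq> dnf_params [C]"
proof (cases "pivots y C")
  case Nil
  have "params_trm (lit_trm l) \<subseteq> dnf_params [C]" if "l \<in> set (bound_pairs y C)" for l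
    using that params_solve unfolding mem_bound_pairs dnf_params_def by force
  then show ?thesis
    using Nil by (auto simp: elim_def dnf_params_def)
next
  case (Cons t ts)
  then have "params_trm (solve y t) \<subseteq> dnf_params [C]"
    using params_solve set_pivots[of t y C] by (force simp: dnf_params_def)
  then show ?thesis
    using Cons params_trm_subst[of y "solve y t"] by (fastforce simp: elim_def dnf_params_def)
qed

locale indep_ordered_space =
  fixes smul :: "'c::linordered_field \<Rightarrow> 'g::ab_group_add \<Rightarrow> 'g"
    and lt :: "'i \<Rightarrow> 'g \<Rightarrow> 'g \<Rightarrow> bool"
  assumes model: "model_T smul lt"
begin

sublocale ord: ordered_space smul "lt i" for i
  using model unfolding model_T_def ordered_space_def ordered_space_axioms_def by blast

lemma independent_bounds:
  assumes "finite J"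
    and fin_Lo: "\<And>i. i \<in> J \<Longrightarrow> finite (Lo i)" and fin_Up: "\<And>i. i \<in> J \<Longrightarrow> finite (Up i)"
    and "\<And>i l u. i \<in> J \<Longrightarrow> l \<in> Lo i \<Longrightarrow> u \<in> Up i \<Longrightarrow> lt i l u"
  shows "\<exists>z. (\<forall>i\<in>J. \<forall>l\<in>Lo i. lt i l z) \<and> (\<forall>i\<in>J. \<forall>u\<in>Up i. lt i z u)"
proof -
  have "\<exists>m \<in> Lo i. \<forall>x\<in>Lo i. x \<noteq> m \<longrightarrow> lt i x m" if "i \<in> J" "Lo i \<noteq> {}" for i
    using Finite_Set.bex_greatest_element[OF fin_Lo[OF that(1)] that(2)]
    by (simp add: ord.transp_on_lt ord.totalp_on_lt)
  then obtain mx where mx: "\<And>i. i \<in> J \<Longrightarrow> Lo i \<noteq> {} \<Longrightarrow>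
      mx i \<in> Lo i \<and> (\<forall>x\<in>Lo i. x \<noteq> mx i \<longrightarrow> lt i x (mx i))"
    by metis
  have "\<exists>m \<in> Up i. \<forall>x\<in>Up i. x \<noteq> m \<longrightarrow> lt i m x" if "i \<in> J" "Up i \<noteq> {}" for i
    using Finite_Set.bex_least_element[OF fin_Up[OF that(1)] that(2)]
    by (simp add: ord.transp_on_lt ord.totalp_on_lt)
  then obtain mn where mn: "\<And>i. i \<in> J \<Longrightarrow> Up i \<noteq> {} \<Longrightarrow>
      mn i \<in> Up i \<and> (\<forall>x\<in>Up i. x \<noteq> mn i \<longrightarrow> lt i (mn i) x)"
    by metis
  define a where "a i = (if Lo i = {} then None else Some (mx i))" for i
  define b where "b i = (if Up i = {} then None else Some (mn i))" for i
  have "\<forall>k\<in>J. \<forall>a' b'. a k = Some a' \<longrightarrow> b k = Some b' \<longrightarrow> lt k a' b'"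
    using mx mn assms(4) by (auto simp: a_def b_def)
  then obtain z where z: "\<forall>k\<in>J. (case a k of None \<Rightarrow> True | Some a' \<Rightarrow> lt k a' z) \<and>
      (case b k of None \<Rightarrow> True | Some b' \<Rightarrow> lt k z b')"
    using model assms(1) unfolding model_T_def independent_ordering_def by blast
  have "lt i l z" if i: "i \<in> J" and l: "l \<in> Lo i" for i l
  proof -
    from l have ne: "Lo i \<noteq> {}"
      by auto
    have "lt i (mx i) z"
      using bspec[OF z i] ne by (simp add: a_def)
    then show "lt i l z"
      using mx[OF i ne] l by (metis ord.lt_trans)
  qed
  moreover have "lt i z u" if i: "i \<in> J" and u: "u \<in> Up i" for i u
  proof -
    from u have ne: "Up i \<noteq> {}"
      by auto
    have "lt i z (mn i)"
      using bspec[OF z i] ne by (simp add: b_def)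
    then show "lt i z u"
      using mn[OF i ne] u by (metis ord.lt_trans)
  qed
  ultimately show ?thesis
    by blast
qed

lemma dnf_sat_conj:
  "dnf_sat smul lt v (dnf_conj D1 D2) \<longleftrightarrow> dnf_sat smul lt v D1 \<and> dnf_sat smul lt v D2"
  unfolding dnf_sat_def conj_sat_def dnf_conj_def by fastforce

lemma dnf_sat_lit_neg: "dnf_sat smul lt v (lit_neg i0 l) \<longleftrightarrow> \<not> lit_sat smul lt v l"
proof (cases l)
  case (Eq0 t)
  then show ?thesis
    using ord.lt_linear[of "eval smul v t" 0 i0]
    by (auto simp: dnf_sat_def conj_sat_def ord.neg_pos_iff)
next
  case (Gt0 i t)
  then show ?thesis
    using ord.lt_linear[of "eval smul v t" 0 i] ord.lt_asym
    by (auto simp: dnf_sat_def conj_sat_def ord.neg_pos_iff)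
qed

lemma dnf_sat_neg: "dnf_sat smul lt v (dnf_neg i0 D) \<longleftrightarrow> \<not> dnf_sat smul lt v D"
proof (induction D)
  case (Cons C D)
  have "dnf_sat smul lt v (concat (map (lit_neg i0) C)) \<longleftrightarrow> \<not> conj_sat smul lt v C"
    using dnf_sat_lit_neg[of v i0] by (auto simp: dnf_sat_def conj_sat_def)
  moreover have "dnf_sat smul lt v (C # D) \<longleftrightarrow> conj_sat smul lt v C \<or> dnf_sat smul lt v D"
    by (simp add: dnf_sat_def)
  ultimately show ?case
    using Cons by (simp add: dnf_neg_Cons dnf_sat_conj)
qed (simp add: dnf_neg_def dnf_sat_def conj_sat_def)

lemma lit_sat_subst:
  "lit_sat smul lt v (lit_subst y s l) \<longleftrightarrow> lit_sat smul lt (v(y := eval smul v s)) l"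
  by (cases l) (simp_all add: ord.eval_trm_subst)

lemma lit_sat_upd_coeff_0:
  "coeff y (lit_trm l) = 0 \<Longrightarrow> lit_sat smul lt (v(y := g)) l \<longleftrightarrow> lit_sat smul lt v l"
  by (cases l) (simp_all add: ord.eval_upd_coeff_0)

lemma elim_pivot:
  assumes "Eq0 t \<in> set C" and "coeff y t \<noteq> 0"
  shows "(\<exists>g. conj_sat smul lt (v(y := g)) C) \<longleftrightarrow>
    conj_sat smul lt v (map (lit_subst y (solve y t)) C)"
proof
  assume "\<exists>g. conj_sat smul lt (v(y := g)) C"
  then obtain g where g: "conj_sat smul lt (v(y := g)) C" ..
  then have "eval smul (v(y := g)) t = 0"
    using assms(1) by (auto simp: conj_sat_def)
  then have "g = eval smul v (solve y t)"
    using assms(2) by (simp add: ord.eval_upd_solve)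
  with g show "conj_sat smul lt v (map (lit_subst y (solve y t)) C)"
    by (simp add: conj_sat_def lit_sat_subst)
qed (auto simp: conj_sat_def lit_sat_subst)

lemma conj_sat_bound_pairs:
  assumes "conj_sat smul lt (v(y := g)) C"
  shows "conj_sat smul lt v (bound_pairs y C)"
  unfolding conj_sat_def
proof
  fix x assume "x \<in> set (bound_pairs y C)"
  then obtain i l u where lu: "Gt0 i l \<in> set C" "Gt0 i u \<in> set C" "0 < coeff y l" "coeff y u < 0"
    and x: "x = Gt0 i (Plus (solve y u) (Scal (-1) (solve y l)))"
    unfolding mem_bound_pairs by blast
  have "lt i (eval smul v (solve y l)) g" "lt i g (eval smul v (solve y u))"
    using assms lu
    by (auto simp: conj_sat_def ord.lt_0_eval_upd_pos_coeff ord.lt_0_eval_upd_neg_coeff)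
  then show "lit_sat smul lt v x"
    unfolding x by (simp add: ord.lt_iff_diff_pos[symmetric] ord.lt_trans)
qed

lemma exists_between_bounds:
  assumes sat: "conj_sat smul lt v (bound_pairs y C)"
  shows "\<exists>z. \<forall>i t. Gt0 i t \<in> set C \<longrightarrow>
    (0 < coeff y t \<longrightarrow> lt i (eval smul v (solve y t)) z) \<and>
    (coeff y t < 0 \<longrightarrow> lt i z (eval smul v (solve y t)))"
proof -
  define \<rho> where "\<rho> t = eval smul v (solve y t)" for t
  define Lo where "Lo i = {\<rho> t | t. Gt0 i t \<in> set C \<and> 0 < coeff y t}" for i
  define Up where "Up i = {\<rho> t | t. Gt0 i t \<in> set C \<and> coeff y t < 0}" for i
  define J where "J = {i. \<exists>t. Gt0 i t \<in> set C}"
  have fin: "finite {\<rho> t | t. Gt0 i t \<in> set C \<and> P t}" for i P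
    by (rule finite_subset[of _ "(\<lambda>l. \<rho> (lit_trm l)) ` set C"]) force+
  have "J \<subseteq> (\<lambda>l. case l of Gt0 i t \<Rightarrow> i | Eq0 t \<Rightarrow> undefined) ` set C"
    unfolding J_def by force
  then have "finite J"
    by (rule finite_subset) simp
  moreover have "finite (Lo i)" "finite (Up i)" for i
    unfolding Lo_def Up_def by (rule fin)+
  moreover have "lt i l u" if lu: "l \<in> Lo i" "u \<in> Up i" for i l u
  proof -
    obtain tl tu where "l = \<rho> tl" "u = \<rho> tu" "Gt0 i tl \<in> set C" "Gt0 i tu \<in> set C"
      "0 < coeff y tl" "coeff y tu < 0"
      using lu unfolding Lo_def Up_def by blast
    then have "Gt0 i (Plus (solve y tu) (Scal (-1) (solve y tl))) \<in> set (bound_pairs y C)"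
      unfolding mem_bound_pairs by blast
    then have "lit_sat smul lt v (Gt0 i (Plus (solve y tu) (Scal (-1) (solve y tl))))"
      using sat unfolding conj_sat_def by blast
    then show ?thesis
      using \<open>l = \<rho> tl\<close> \<open>u = \<rho> tu\<close> by (simp add: \<rho>_def ord.lt_iff_diff_pos[symmetric])
  qed
  ultimately obtain z where "\<forall>i\<in>J. \<forall>l\<in>Lo i. lt i l z" and "\<forall>i\<in>J. \<forall>u\<in>Up i. lt i z u"
    using independent_bounds[of J Lo Up] by blast
  moreover have "i \<in> J" if "Gt0 i t \<in> set C" for i t
    using that by (auto simp: J_def)
  ultimately show ?thesis
    unfolding Lo_def Up_def \<rho>_def by blast
qed

lemma elim_no_pivot:
  assumes "pivots y C = []"
  shows "(\<exists>g. conj_sat smul lt (v(y := g)) C) \<longleftrightarrow>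
    conj_sat smul lt v ([l \<leftarrow> C. coeff y (lit_trm l) = 0] @ bound_pairs y C)"
proof
  assume "\<exists>g. conj_sat smul lt (v(y := g)) C"
  then show "conj_sat smul lt v ([l \<leftarrow> C. coeff y (lit_trm l) = 0] @ bound_pairs y C)"
    using conj_sat_bound_pairs lit_sat_upd_coeff_0 by (fastforce simp: conj_sat_def)
next
  assume sat: "conj_sat smul lt v ([l \<leftarrow> C. coeff y (lit_trm l) = 0] @ bound_pairs y C)"
  then have "conj_sat smul lt v (bound_pairs y C)"
    by (simp add: conj_sat_def)
  then obtain z where z: "\<forall>i t. Gt0 i t \<in> set C \<longrightarrow>
      (0 < coeff y t \<longrightarrow> lt i (eval smul v (solve y t)) z) \<and>
      (coeff y t < 0 \<longrightarrow> lt i z (eval smul v (solve y t)))"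
    using exists_between_bounds by blast
  have "lit_sat smul lt (v(y := z)) l" if l: "l \<in> set C" for l
  proof (cases "coeff y (lit_trm l) = 0")
    case True
    then show ?thesis
      using sat l lit_sat_upd_coeff_0 by (auto simp: conj_sat_def)
  next
    case False
    show ?thesis
    proof (cases l)
      case (Eq0 t)
      then show ?thesis
        using assms False l set_pivots[of t y C] by simp
    next
      case (Gt0 i t)
      with False l show ?thesis
        using z
        by (auto simp: neq_iff ord.lt_0_eval_upd_pos_coeff ord.lt_0_eval_upd_neg_coeff)
    qed
  qed
  then show "\<exists>g. conj_sat smul lt (v(y := g)) C"
    by (auto simp: conj_sat_def)
qed

lemma conj_sat_elim: "conj_sat smul lt v (elim y C) \<longleftrightarrow> (\<exists>g. conj_sat smul lt (v(y := g)) C)"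
proof (cases "pivots y C")
  case Nil
  then show ?thesis
    using elim_no_pivot by (simp add: elim_def)
next
  case (Cons t ts)
  then have "Eq0 t \<in> set C" "coeff y t \<noteq> 0"
    using set_pivots[of t y C] by auto
  with Cons show ?thesis
    using elim_pivot by (simp add: elim_def)
qed

lemma dnf_sat_map_elim: "dnf_sat smul lt v (map (elim y) D) \<longleftrightarrow> (\<exists>g. dnf_sat smul lt (v(y := g)) D)"
  using conj_sat_elim unfolding dnf_sat_def by auto

theorem quantifier_elimination:
  "\<exists>D. dnf_params D \<subseteq> params \<phi> \<and> (\<forall>v. sat smul lt v \<phi> \<longleftrightarrow> dnf_sat smul lt v D)"
proof (induction \<phi>)
  case (Eq s t)
  show ?case
    by (rule exI[of _ "[[Eq0 (Plus s (Scal (-1) t))]]"])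
      (auto simp: dnf_params_def dnf_sat_def conj_sat_def)
next
  case (Less i s t)
  show ?case
    by (rule exI[of _ "[[Gt0 i (Plus t (Scal (-1) s))]]"])
      (auto simp: dnf_params_def dnf_sat_def conj_sat_def ord.lt_iff_diff_pos[symmetric])
next
  case (Neg \<phi>)
  then obtain D where "dnf_params D \<subseteq> params \<phi>" "\<forall>v. sat smul lt v \<phi> \<longleftrightarrow> dnf_sat smul lt v D"
    by blast
  then show ?case
    using dnf_params_neg[of undefined D] dnf_sat_neg
    by (intro exI[of _ "dnf_neg undefined D"]) auto
next
  case (Conj \<phi> \<psi>)
  then obtain D1 D2 where "dnf_params D1 \<subseteq> params \<phi>" "\<forall>v. sat smul lt v \<phi> \<longleftrightarrow> dnf_sat smul lt v D1"
    and "dnf_params D2 \<subseteq> params \<psi>" "\<forall>v. sat smul lt v \<psi> \<longleftrightarrow> dnf_sat smul lt v D2"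
    by blast
  then show ?case
    using dnf_params_conj[of D1 D2] dnf_sat_conj
    by (intro exI[of _ "dnf_conj D1 D2"]) auto
next
  case (Ex y \<phi>)
  then obtain D where D: "dnf_params D \<subseteq> params \<phi>" "\<forall>v. sat smul lt v \<phi> \<longleftrightarrow> dnf_sat smul lt v D"
    by blast
  have "dnf_params (map (elim y) D) \<subseteq> dnf_params D"
    using dnf_params_elim by (fastforce simp: dnf_params_def)
  then show ?case
    using D dnf_sat_map_elim by (intro exI[of _ "map (elim y) D"]) auto
qed

end

section \<open>Increasing tuples\<close>

lemma incr_in_comp:
  assumes "incr_in X K U" and "\<forall>p<k. \<pi> p < K" and "\<forall>p q. p < q \<longrightarrow> q < k \<longrightarrow> \<pi> p < \<pi> q"
  shows "incr_in X k (U \<circ> \<pi>)"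
  using assms unfolding incr_in_def by auto

lemma incr_in_mono: "X \<subseteq> Y \<Longrightarrow> incr_in X k S \<Longrightarrow> incr_in Y k S"
  unfolding incr_in_def by blast

lemma incr_in_Diff:
  "incr_in X k T \<Longrightarrow> (\<forall>p<k. T p \<notin> Y) \<Longrightarrow> incr_in (X - Y) k T"
  unfolding incr_in_def by auto

lemma incr_in_less_iff:
  assumes "incr_in X k S" and "p < k" and "q < k"
  shows "S p < S q \<longleftrightarrow> p < q"
  using assms unfolding incr_in_def by (metis linorder_neqE_nat order.asym)

lemma infinite_imp_incr_in:
  fixes X :: "'o::linorder set"
  assumes "infinite X"
  obtains L where "incr_in X m L"
proof -
  obtain F where F: "F \<subseteq> X" "finite F" "card F = m"
    using infinite_arbitrarily_large[OF assms] by blast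
  obtain xs where xs: "sorted_wrt (<) xs" "set xs = F" "length xs = m"
    using finite_set_strict_sorted[OF F(2)] F(3) by blast
  have "incr_in X m (\<lambda>p. xs ! p)"
    using xs F(1) sorted_wrt_nth_less[OF xs(1)] unfolding incr_in_def by auto
  then show thesis ..
qed

definition gap :: "nat \<Rightarrow> (nat \<Rightarrow> 'o::linorder) \<Rightarrow> nat \<Rightarrow> 'o set" where
  "gap k S q = {x. (\<forall>p<q. S p < x) \<and> (\<forall>p. q \<le> p \<longrightarrow> p < k \<longrightarrow> x < S p)}"

lemma gap_less_imp_le: "x \<in> gap k S q \<Longrightarrow> x < S p \<Longrightarrow> p < k \<Longrightarrow> q \<le> p"
  unfolding gap_def by (auto simp: not_le dest: order.asym)

lemma gap_greater_imp_less: "x \<in> gap k S q \<Longrightarrow> S p < x \<Longrightarrow> p < k \<Longrightarrow> p < q"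
  unfolding gap_def by (auto simp: not_less dest: order.asym)

lemma gap_cover:
  assumes "incr_in UNIV k S" and "x \<notin> S ` {..<k}"
  shows "\<exists>q\<le>k. x \<in> gap k S q"
proof -
  define q where "q = (LEAST q. q = k \<or> x < S q)"
  have q: "q = k \<or> x < S q"
    unfolding q_def by (rule LeastI[of _ k]) simp
  have "q \<le> k"
    unfolding q_def by (rule Least_le) simp
  have "S p < x" if "p < q" for p
  proof -
    have "\<not> x < S p" "p < k"
      using that not_less_Least[of p "\<lambda>q. q = k \<or> x < S q"] \<open>q \<le> k\<close> unfolding q_def by auto
    moreover have "S p \<noteq> x"
      using assms(2) \<open>p < k\<close> by auto
    ultimately show ?thesis
      by auto
  qed
  moreover have "x < S p" if "q \<le> p" "p < k" for p
  proof -
    have "x < S q"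
      using q that by auto
    then show ?thesis
      using incr_in_less_iff[OF assms(1), of q p] that by (cases "q = p") auto
  qed
  ultimately show ?thesis
    using \<open>q \<le> k\<close> unfolding gap_def by blast
qed

lemma infinite_gap:
  assumes "incr_in UNIV k S" and "infinite X"
  obtains q where "q \<le> k" and "infinite (X \<inter> gap k S q)"
proof -
  have "X \<subseteq> (\<Union>q\<le>k. X \<inter> gap k S q) \<union> S ` {..<k}"
    using gap_cover[OF assms(1)] by blast
  moreover have "finite ((\<Union>q\<le>k. X \<inter> gap k S q) \<union> S ` {..<k})"
    if "\<forall>q\<le>k. finite (X \<inter> gap k S q)"
    using that by (intro finite_UnI finite_UN_I) auto
  ultimately have "\<exists>q\<le>k. infinite (X \<inter> gap k S q)"
    using assms(2) finite_subset by blast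
  then show thesis
    using that by blast
qed

definition ins_block :: "(nat \<Rightarrow> 'o) \<Rightarrow> nat \<Rightarrow> (nat \<Rightarrow> 'o) \<Rightarrow> nat \<Rightarrow> nat \<Rightarrow> 'o" where
  "ins_block S q B M r = (if r < q then S r else if r < q + M then B (r - q) else S (r - M))"

definition skip_block :: "nat \<Rightarrow> nat \<Rightarrow> nat \<Rightarrow> nat" where
  "skip_block q M p = (if p < q then p else p + M)"

definition replace_block :: "(nat \<Rightarrow> 'o) \<Rightarrow> nat \<Rightarrow> (nat \<Rightarrow> 'o) \<Rightarrow> nat \<Rightarrow> nat \<Rightarrow> 'o" where
  "replace_block S q B M p = (if q \<le> p \<and> p < q + M then B (p - q) else S p)"

lemma ins_block_skip_block: "ins_block S q B M \<circ> skip_block q M = S"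
  by (auto simp: fun_eq_iff ins_block_def skip_block_def)

lemma ins_block_skip_block_after: "ins_block S q B M \<circ> skip_block (q + M) M = replace_block S q B M"
  by (auto simp: fun_eq_iff ins_block_def skip_block_def replace_block_def)

lemma ins_block_after_skip_block: "ins_block S (q + M) B M \<circ> skip_block q M = replace_block S q B M"
  by (auto simp: fun_eq_iff ins_block_def skip_block_def replace_block_def)

lemma skip_block_bound: "p < k \<Longrightarrow> skip_block q M p < k + M"
  by (simp add: skip_block_def)

lemma skip_block_strict_mono: "p < p' \<Longrightarrow> skip_block q M p < skip_block q M p'"
  by (simp add: skip_block_def)

lemma incr_in_ins_block:
  fixes S :: "nat \<Rightarrow> 'o::linorder"
  assumes S: "incr_in UNIV k S" and "q \<le> k" and B: "incr_in (gap k S q) M B"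
  shows "incr_in UNIV (k + M) (ins_block S q B M)"
proof -
  have S_mono: "S p < S p'" if "p < p'" "p' < k" for p p'
    using S that unfolding incr_in_def by blast
  have B_mono: "B j < B j'" if "j < j'" "j' < M" for j j'
    using B that unfolding incr_in_def by blast
  have B_above: "S p < B j" if "j < M" "p < q" for j p
    using B that unfolding incr_in_def gap_def by auto
  have B_below: "B j < S p" if "j < M" "q \<le> p" "p < k" for j p
    using B that unfolding incr_in_def gap_def by auto
  have "ins_block S q B M r < ins_block S q B M r'" if "r < r'" "r' < k + M" for r r'
    using that \<open>q \<le> k\<close> S_mono[of r r'] S_mono[of r "r' - M"] S_mono[of "r - M" "r' - M"]
      B_mono[of "r - q" "r' - q"] B_above[of "r' - q" r] B_below[of "r - q" "r' - M"]
    unfolding ins_block_def by auto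
  then show ?thesis
    unfolding incr_in_def by auto
qed

lemma replace_block_avoids:
  assumes S: "incr_in UNIV k S" and "q \<le> p0" "p0 < q + M" "p0 < k"
    and "\<forall>j<M. B j \<noteq> S p0" and "p < k"
  shows "replace_block S q B M p \<noteq> S p0"
  using assms incr_in_less_iff[OF S, of p p0] incr_in_less_iff[OF S, of p0 p]
  by (auto simp: replace_block_def)

text \<open>
  \<open>T\<close> (\<open>T'\<close>) replaces a block of \<open>S\<close> containing position \<open>p0\<close> by points in an infinite
  gap below (above) \<open>S p0\<close>; \<open>U\<close> merges \<open>S\<close> with \<open>T\<close>, \<open>U'\<close> merges \<open>T'\<close> with \<open>S\<close>, and
  the two pairs sit in them at the same positions \<open>\<phi>\<close>, \<open>\<phi>'\<close>.
\<close>

lemma exists_interleaved_copies: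
  fixes S :: "nat \<Rightarrow> 'o::linorder"
  assumes S: "incr_in UNIV k S" and p0: "p0 < k"
    and below: "infinite {..<S p0}" and above: "infinite {S p0<..}"
  obtains K U U' \<phi> \<phi>' T T' where
    "incr_in UNIV K U" "incr_in UNIV K U'" "\<forall>p<k. \<phi> p < K" "\<forall>p<k. \<phi>' p < K"
    "U \<circ> \<phi> = S" "U \<circ> \<phi>' = T" "U' \<circ> \<phi> = T'" "U' \<circ> \<phi>' = S"
    "incr_in (UNIV - {S p0}) k T" "incr_in (UNIV - {S p0}) k T'"
proof -
  obtain q where q: "q \<le> k" "infinite ({..<S p0} \<inter> gap k S q)"
    using infinite_gap[OF S below] .
  obtain q' where q': "q' \<le> k" "infinite ({S p0<..} \<inter> gap k S q')"
    using infinite_gap[OF S above] .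
  obtain x x' where "x \<in> {..<S p0} \<inter> gap k S q" "x' \<in> {S p0<..} \<inter> gap k S q'"
    using q(2) q'(2) by (metis ex_in_conv finite.emptyI)
  then have "q \<le> p0" "p0 < q'"
    using gap_less_imp_le gap_greater_imp_less p0 by auto
  define M where "M = q' - q"
  then have q'_eq: "q' = q + M"
    using \<open>q \<le> p0\<close> \<open>p0 < q'\<close> by simp
  obtain L where L: "incr_in ({..<S p0} \<inter> gap k S q) M L"
    using infinite_imp_incr_in[OF q(2)] .
  obtain R where R: "incr_in ({S p0<..} \<inter> gap k S q') M R"
    using infinite_imp_incr_in[OF q'(2)] .
  define U where "U = ins_block S q L M"
  define U' where "U' = ins_block S q' R M"
  have U: "incr_in UNIV (k + M) U" and U': "incr_in UNIV (k + M) U'"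
    unfolding U_def U'_def using incr_in_mono[OF _ L] incr_in_mono[OF _ R] q(1) q'(1)
    by (auto intro!: incr_in_ins_block[OF S])
  have comp: "U \<circ> skip_block q M = S" "U \<circ> skip_block q' M = replace_block S q L M"
    "U' \<circ> skip_block q M = replace_block S q R M" "U' \<circ> skip_block q' M = S"
    unfolding U_def U'_def q'_eq
    by (simp_all add: ins_block_skip_block ins_block_skip_block_after ins_block_after_skip_block)
  have \<phi>: "\<forall>p<k. skip_block q M p < k + M" "\<forall>p<k. skip_block q' M p < k + M"
    by (simp_all add: skip_block_bound)
  have "incr_in UNIV k (replace_block S q L M)" "incr_in UNIV k (replace_block S q R M)"
    using incr_in_comp[OF U \<phi>(2)] incr_in_comp[OF U' \<phi>(1)] comp skip_block_strict_mono by auto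
  moreover have "\<forall>j<M. L j \<noteq> S p0" "\<forall>j<M. R j \<noteq> S p0"
    using L R unfolding incr_in_def by auto
  ultimately have "incr_in (UNIV - {S p0}) k (replace_block S q L M)"
    "incr_in (UNIV - {S p0}) k (replace_block S q R M)"
    using replace_block_avoids[OF S \<open>q \<le> p0\<close> _ p0] \<open>p0 < q'\<close> q'_eq
    by (auto intro!: incr_in_Diff)
  with U U' \<phi> comp show thesis
    by (rule that)
qed

section \<open>Distality\<close>

text \<open>
  Renames the variables of the \<open>p\<close>-th block of \<open>n\<close> variables to those of block \<open>\<pi> p\<close>;
  variables beyond the \<open>k\<close> blocks move beyond the \<open>K\<close> blocks, so both assignments send
  them to \<open>0\<close>.
\<close>

definition reindex_var :: "nat \<Rightarrow> nat \<Rightarrow> nat \<Rightarrow> (nat \<Rightarrow> nat) \<Rightarrow> nat \<Rightarrow> nat" where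
  "reindex_var n k K \<pi> x = (if x < k * n then \<pi> (x div n) * n + x mod n else x + K * n)"

lemma seq_asg_reindex:
  assumes "\<forall>p<k. \<pi> p < K"
  shows "seq_asg n a K U \<circ> reindex_var n k K \<pi> = seq_asg n a k (U \<circ> \<pi>)"
proof
  fix x
  show "(seq_asg n a K U \<circ> reindex_var n k K \<pi>) x = seq_asg n a k (U \<circ> \<pi>) x"
  proof (cases "x < k * n")
    case True
    then have "0 < n"
      by (cases n) auto
    with True have "x div n < k" "x mod n < n"
      by (auto simp: less_mult_imp_div_less mult.commute)
    then have "\<pi> (x div n) * n + x mod n < (\<pi> (x div n) + 1) * n"
      by simp
    also have "\<dots> \<le> K * n"
      using assms \<open>x div n < k\<close> by (intro mult_right_mono) auto
    finally have "\<pi> (x div n) * n + x mod n < K * n" .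
    then show ?thesis
      using True \<open>x mod n < n\<close> by (simp add: seq_asg_def reindex_var_def)
  qed (simp add: seq_asg_def reindex_var_def)
qed

context indep_ordered_space
begin

definition same_sign :: "'g \<Rightarrow> 'g \<Rightarrow> bool" where
  "same_sign x y \<longleftrightarrow> (x = 0 \<longleftrightarrow> y = 0) \<and> (\<forall>i. lt i 0 x \<longleftrightarrow> lt i 0 y)"

lemma same_sign_sym: "same_sign x y \<Longrightarrow> same_sign y x"
  unfolding same_sign_def by blast

lemma same_sign_trans: "same_sign x y \<Longrightarrow> same_sign y z \<Longrightarrow> same_sign x z"
  unfolding same_sign_def by blast

lemma same_sign_between:
  assumes "same_sign (x - y) (z - x)" and "same_sign y z"
  shows "same_sign x y"
proof -
  have "(x = 0 \<longleftrightarrow> y = 0) \<and> (lt i 0 x \<longleftrightarrow> lt i 0 y)" for i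
    using assms ord.sign_between[where x = x and y = y and z = z and i = i]
    by (simp add: same_sign_def ord.lt_iff_diff_pos[symmetric] eq_commute[of x z])
  then show ?thesis
    unfolding same_sign_def by blast
qed

lemma indiscernible_same_sign:
  assumes "indiscernible smul lt n a J A" and "params_trm t \<subseteq> A"
    and "incr_in J k S" and "incr_in J k T"
  shows "same_sign (eval smul (seq_asg n a k S) t) (eval smul (seq_asg n a k T) t)"
proof -
  have sat: "sat smul lt (seq_asg n a k S) \<phi> \<longleftrightarrow> sat smul lt (seq_asg n a k T) \<phi>"
    if "params \<phi> \<subseteq> A" for \<phi> :: "('c, 'i, 'g) fm"
    using assms(1,3,4) that unfolding indiscernible_def by blast
  show ?thesis
    unfolding same_sign_def using sat[of "Eq t Zero"] sat[of "Less _ Zero t"] assms(2) by simp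
qed

lemma dnf_sat_same_sign:
  assumes "\<And>t. params_trm t \<subseteq> A \<Longrightarrow> same_sign (eval smul v t) (eval smul w t)"
    and "dnf_params D \<subseteq> A"
  shows "dnf_sat smul lt v D \<longleftrightarrow> dnf_sat smul lt w D"
proof -
  have "lit_sat smul lt v l \<longleftrightarrow> lit_sat smul lt w l" if "params_trm (lit_trm l) \<subseteq> A" for l
    using assms(1)[OF that] by (cases l) (auto simp: same_sign_def)
  then have "conj_sat smul lt v C \<longleftrightarrow> conj_sat smul lt w C" if "C \<in> set D" for C
    using that assms(2) unfolding conj_sat_def dnf_params_def by blast
  then show ?thesis
    unfolding dnf_sat_def by blast
qed

lemma same_sign_around:
  fixes S :: "nat \<Rightarrow> 'o::linorder"
  assumes ind0: "indiscernible smul lt n a UNIV {}"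
    and S: "incr_in UNIV k S" and p0: "p0 < k"
    and below: "infinite {..<S p0}" and above: "infinite {S p0<..}"
  obtains T T' where "incr_in (UNIV - {S p0}) k T" and "incr_in (UNIV - {S p0}) k T'"
    and "\<And>t. same_sign (eval smul (seq_asg n a k S) t - eval smul (seq_asg n a k T) t)
      (eval smul (seq_asg n a k T') t - eval smul (seq_asg n a k S) t)"
proof -
  obtain K U U' \<phi> \<phi>' T T' where U: "incr_in UNIV K U" "incr_in UNIV K U'"
    and \<phi>: "\<forall>p<k. \<phi> p < K" "\<forall>p<k. \<phi>' p < K"
    and comp: "U \<circ> \<phi> = S" "U \<circ> \<phi>' = T" "U' \<circ> \<phi> = T'" "U' \<circ> \<phi>' = S"
    and T: "incr_in (UNIV - {S p0}) k T" "incr_in (UNIV - {S p0}) k T'"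
    using exists_interleaved_copies[OF S p0 below above] by blast
  define F where "F t X = eval smul (seq_asg n a k X) t" for t X
  have "same_sign (F t S - F t T) (F t T' - F t S)" for t
  proof -
    \<comment> \<open>\<open>t\<close> and its parameter-free linear part differ by a constant, which cancels.\<close>
    define d where "d = Plus (trm_rename (reindex_var n k K \<phi>) (linear_part t))
      (Scal (-1) (trm_rename (reindex_var n k K \<phi>') (linear_part t)))"
    have d: "eval smul (seq_asg n a K V) d = F t (V \<circ> \<phi>) - F t (V \<circ> \<phi>')" for V
      using ord.eval_linear_part[of "seq_asg n a k (V \<circ> \<phi>)" t]
        ord.eval_linear_part[of "seq_asg n a k (V \<circ> \<phi>')" t]
      by (simp add: d_def F_def ord.eval_trm_rename seq_asg_reindex \<phi>)
    have "same_sign (eval smul (seq_asg n a K U) d) (eval smul (seq_asg n a K U') d)"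
      by (rule indiscernible_same_sign[OF ind0 _ U]) (simp add: d_def)
    then show ?thesis
      using d comp by simp
  qed
  with T show thesis
    using that unfolding F_def by blast
qed

lemma same_sign_off_point:
  fixes c :: "'o::linorder"
  assumes ind0: "indiscernible smul lt n a UNIV {}"
    and indA: "indiscernible smul lt n a (UNIV - {c}) A"
    and below: "infinite {..<c}" and above: "infinite {c<..}"
    and t: "params_trm t \<subseteq> A" and S: "incr_in UNIV k S" and T: "incr_in (UNIV - {c}) k T"
  shows "same_sign (eval smul (seq_asg n a k S) t) (eval smul (seq_asg n a k T) t)"
proof (cases "\<exists>p<k. S p = c")
  case False
  then show ?thesis
    using indiscernible_same_sign[OF indA t incr_in_Diff[OF S] T] by auto
next
  case True
  then obtain p0 where "p0 < k" "S p0 = c"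
    by blast
  then obtain T0 T0' where T0: "incr_in (UNIV - {c}) k T0" "incr_in (UNIV - {c}) k T0'"
    and around: "same_sign (eval smul (seq_asg n a k S) t - eval smul (seq_asg n a k T0) t)
      (eval smul (seq_asg n a k T0') t - eval smul (seq_asg n a k S) t)"
    using same_sign_around[OF ind0 S] below above by metis
  have off_c: "same_sign (eval smul (seq_asg n a k X) t) (eval smul (seq_asg n a k T) t)"
    if "incr_in (UNIV - {c}) k X" for X
    using indiscernible_same_sign[OF indA t that T] .
  have "same_sign (eval smul (seq_asg n a k T0) t) (eval smul (seq_asg n a k T0') t)"
    using same_sign_trans[OF off_c[OF T0(1)] same_sign_sym[OF off_c[OF T0(2)]]] .
  then have "same_sign (eval smul (seq_asg n a k S) t) (eval smul (seq_asg n a k T0) t)"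
    by (rule same_sign_between[OF around])
  then show ?thesis
    using same_sign_trans off_c[OF T0(1)] by blast
qed

theorem distal:
  fixes a :: "'o::linorder \<Rightarrow> nat \<Rightarrow> 'g" and c :: 'o
  assumes below: "infinite {..<c}" and above: "infinite {c<..}"
    and ind0: "indiscernible smul lt n a UNIV {}"
    and indA: "indiscernible smul lt n a (UNIV - {c}) A"
  shows "indiscernible smul lt n a UNIV A"
  unfolding indiscernible_def
proof (intro allI impI)
  fix \<phi> :: "('c, 'i, 'g) fm" and k and S T :: "nat \<Rightarrow> 'o"
  assume \<phi>: "params \<phi> \<subseteq> A" and S: "incr_in UNIV k S" and T: "incr_in UNIV k T"
  obtain D where D: "dnf_params D \<subseteq> params \<phi>" "\<And>v. sat smul lt v \<phi> \<longleftrightarrow> dnf_sat smul lt v D"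
    using quantifier_elimination by blast
  obtain L where "incr_in {c<..} k L"
    using infinite_imp_incr_in[OF above] .
  then have L: "incr_in (UNIV - {c}) k L"
    by (rule incr_in_mono[rotated]) auto
  have "sat smul lt (seq_asg n a k X) \<phi> \<longleftrightarrow> dnf_sat smul lt (seq_asg n a k L) D"
    if "incr_in UNIV k X" for X
    using dnf_sat_same_sign[OF same_sign_off_point[OF ind0 indA below above _ that L]] D \<phi>
    by blast
  then show "sat smul lt (seq_asg n a k S) \<phi> \<longleftrightarrow> sat smul lt (seq_asg n a k T) \<phi>"
    using S T by blast
qed

end

theorem corollary3p5:
  fixes smul :: "'c::linordered_field \<Rightarrow> 'g::ab_group_add \<Rightarrow> 'g"
    and lt :: "'i \<Rightarrow> 'g \<Rightarrow> 'g \<Rightarrow> bool"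
  assumes "model_T smul lt"
  shows "\<forall>(A::'g set) (n::nat) (a::'o::linorder \<Rightarrow> nat \<Rightarrow> 'g) (c::'o).
           infinite {..<c} \<longrightarrow> infinite {c<..} \<longrightarrow>
           indiscernible smul lt n a UNIV {} \<longrightarrow>
           indiscernible smul lt n a (UNIV - {c}) A \<longrightarrow>
           indiscernible smul lt n a UNIV A"
proof -
  interpret indep_ordered_space smul lt
    using assms by (rule indep_ordered_space.intro)
  show ?thesis
    using distal by blast
qed

end
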